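(* Let $G$ be a unimodular lcsc group with Haar measure $m_G$, let $d$ be a left-invariant metric on $G$ whose closed balls $B_t=\{g: d(e,g)\le t\}$ are compact of positive measure, and let $\beta_t$ be the probability measure with density $\chi_{B_t}/m_G(B_t)$. Fix $r>0$ and $1<p<\infty$, and suppose that for all $F\in L^p(G)$, $$\Big\|\sup_{0<t\le r}|\rho(\beta_t)F|\Big\|_{L^p(G)}\le C_p\|F\|_{L^p(G)},\qquad \rho(\beta_t)F(g)=\int_G F(gh)\,d\beta_t(h).$$ Then (1) for every measure-preserving action of $G$ on a $\sigma$-finite measure space $(X,m)$, every $f\in L^p(X)$ and every $R\ge 2r$, $$\Big\|\sup_{0<t\le r}|\pi(\beta_t)f|\Big\|_{L^p(X)}\le C_p\Big(\frac{m_G(B_R)}{m_G(B_{R-r})}\Big)^{1/p}\|f\|_{L^p(X)};$$ (2) consequently, if $\lim_{R\to\infty}m_G(B_R)/m_G(B_{R-r})=1$ for every $r>0$ and the hypothesis holds for every $r>0$ with the same constant $C_p$, then $\|\sup_{0<t<\infty}|\pi(\beta_t)f|\|_{L^p(X)}\le C_p\|f\|_{L^p(X)}$ in every such action.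
   Context: For a measure-preserving action of $G$ on $(X,m)$ and a probability measure $\mu$ on $G$, $\pi(\mu)f(x)=\int_G f(g^{-1}x)\,d\mu(g)$. *)

theory Defs
  imports "HOL-Analysis.Analysis"
begin

definition lcsc_group :: "('g::{t2_space,second_countable_topology} \<Rightarrow> 'g \<Rightarrow> 'g) \<Rightarrow> 'g \<Rightarrow> ('g \<Rightarrow> 'g) \<Rightarrow> bool" where
  "lcsc_group gm e ginv \<longleftrightarrow>
     (\<forall>x y z. gm (gm x y) z = gm x (gm y z)) \<and>
     (\<forall>x. gm e x = x \<and> gm x e = x) \<and>
     (\<forall>x. gm (ginv x) x = e \<and> gm x (ginv x) = e) \<and>
     continuous_on UNIV (\<lambda>(x,y). gm x y) \<and> continuous_on UNIV ginv \<and>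
     locally_compact_space (euclidean :: 'g topology)"

definition left_haar :: "('g::topological_space \<Rightarrow> 'g \<Rightarrow> 'g) \<Rightarrow> 'g measure \<Rightarrow> bool" where
  "left_haar gm mG \<longleftrightarrow>
     sets mG = sets borel \<and>
     (\<forall>g A. A \<in> sets mG \<longrightarrow> emeasure mG ((\<lambda>x. gm g x) ` A) = emeasure mG A) \<and>
     (\<forall>K. compact K \<longrightarrow> emeasure mG K < \<infinity>) \<and>
     (\<forall>U. open U \<and> U \<noteq> {} \<longrightarrow> emeasure mG U > 0)"

definition unimodular_haar :: "('g::topological_space \<Rightarrow> 'g \<Rightarrow> 'g) \<Rightarrow> 'g measure \<Rightarrow> bool" where
  "unimodular_haar gm mG \<longleftrightarrow> left_haar gm mG \<and>
     (\<forall>g A. A \<in> sets mG \<longrightarrow> emeasure mG ((\<lambda>x. gm x g) ` A) = emeasure mG A)"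

definition left_inv_metric :: "('g \<Rightarrow> 'g \<Rightarrow> 'g) \<Rightarrow> ('g \<Rightarrow> 'g \<Rightarrow> real) \<Rightarrow> bool" where
  "left_inv_metric gm d \<longleftrightarrow>
     (\<forall>x y. d x y = 0 \<longleftrightarrow> x = y) \<and> (\<forall>x y. d x y = d y x) \<and>
     (\<forall>x y z. d x z \<le> d x y + d y z) \<and>
     (\<forall>g x y. d (gm g x) (gm g y) = d x y)"

definition Bt :: "('g \<Rightarrow> 'g \<Rightarrow> real) \<Rightarrow> 'g \<Rightarrow> real \<Rightarrow> 'g set" where
  "Bt d e t = {g. d e g \<le> t}"

definition rho_beta :: "('g \<Rightarrow> 'g \<Rightarrow> 'g) \<Rightarrow> 'g measure \<Rightarrow> ('g \<Rightarrow> 'g \<Rightarrow> real) \<Rightarrow> 'g \<Rightarrow> real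
    \<Rightarrow> ('g \<Rightarrow> real) \<Rightarrow> 'g \<Rightarrow> real" where
  "rho_beta gm mG d e t F g = (\<integral>h. indicator (Bt d e t) h * F (gm g h) \<partial>mG) / measure mG (Bt d e t)"

definition pi_beta :: "('g \<Rightarrow> 'x \<Rightarrow> 'x) \<Rightarrow> ('g \<Rightarrow> 'g) \<Rightarrow> 'g measure \<Rightarrow> ('g \<Rightarrow> 'g \<Rightarrow> real) \<Rightarrow> 'g
    \<Rightarrow> real \<Rightarrow> ('x \<Rightarrow> real) \<Rightarrow> 'x \<Rightarrow> real" where
  "pi_beta a ginv mG d e t f x = (\<integral>g. indicator (Bt d e t) g * f (a (ginv g) x) \<partial>mG) / measure mG (Bt d e t)"

definition mp_action :: "('g \<Rightarrow> 'g \<Rightarrow> 'g) \<Rightarrow> 'g \<Rightarrow> 'g measure \<Rightarrow> 'x measure \<Rightarrow> ('g \<Rightarrow> 'x \<Rightarrow> 'x) \<Rightarrow> bool" where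
  "mp_action gm e mG M a \<longleftrightarrow>
     (\<lambda>(g,x). a g x) \<in> measurable (mG \<Otimes>\<^sub>M M) M \<and>
     (\<forall>x \<in> space M. a e x = x) \<and>
     (\<forall>g h. \<forall>x \<in> space M. a (gm g h) x = a g (a h x)) \<and>
     (\<forall>g. a g \<in> measurable M M \<and> distr M M (a g) = M)"

definition epowr :: "ennreal \<Rightarrow> real \<Rightarrow> ennreal" where
  "epowr x q = (if x = \<infinity> then \<infinity> else ennreal (enn2real x powr q))"

definition Lp_norm :: "'a measure \<Rightarrow> real \<Rightarrow> ('a \<Rightarrow> ennreal) \<Rightarrow> ennreal" where
  "Lp_norm M p F = epowr (\<integral>\<^sup>+ x. epowr (F x) p \<partial>M) (1/p)"

definition in_Lp :: "'a measure \<Rightarrow> real \<Rightarrow> ('a \<Rightarrow> real) \<Rightarrow> bool" where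
  "in_Lp M p f \<longleftrightarrow> f \<in> borel_measurable M \<and> Lp_norm M p (\<lambda>x. ennreal \<bar>f x\<bar>) < \<infinity>"

definition local_max_ineq where
  "local_max_ineq gm mG d e p C r \<longleftrightarrow>
     (\<forall>F. in_Lp mG p F \<longrightarrow>
        Lp_norm mG p (\<lambda>g. SUP t\<in>{0<..r}. ennreal \<bar>rho_beta gm mG d e t F g\<bar>)
          \<le> ennreal C * Lp_norm mG p (\<lambda>g. ennreal \<bar>F g\<bar>))"

end

theory Submission
  imports Defs
begin

text \<open>Calderon's transference argument. Fix \<open>x \<in> X\<close> and put \<open>F\<^sub>x(k) = \<chi>\<^bsub>B_R\<^esub>(k) f(k\<^sup>-\<^sup>1x)\<close>.
  For \<open>g \<in> B\<^bsub>R-r\<^esub>\<close> and \<open>0 < t \<le> r\<close> we have \<open>gB\<^sub>t \<subseteq> B\<^sub>R\<close>, hence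
  \<open>\<pi>(\<beta>\<^sub>t)f(g\<^sup>-\<^sup>1x) = \<rho>(\<beta>\<^sub>t)F\<^sub>x(g)\<close>. Integrating the \<open>p\<close>-th power of the maximal function over
  \<open>g \<in> B\<^bsub>R-r\<^esub>\<close> and \<open>x \<in> X\<close>, invariance of \<open>m\<close> turns the left side into
  \<open>m\<^sub>G(B\<^bsub>R-r\<^esub>) \<parallel>sup\<^sub>t |\<pi>(\<beta>\<^sub>t)f|\<parallel>\<^sup>p\<close>, while the maximal inequality on \<open>G\<close> followed by
  Fubini bounds it by \<open>C\<^sup>p m\<^sub>G(B\<^sub>R) \<parallel>f\<parallel>\<^sup>p\<close>. Letting \<open>R \<rightarrow> \<infinity>\<close> and then \<open>r \<rightarrow> \<infinity>\<close>
  (monotone convergence) gives the second part.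

  The supremum over uncountably many \<open>t\<close> is handled by right continuity of
  \<open>t \<mapsto> \<pi>(\<beta>\<^sub>t)f(x)\<close>, valid whenever \<open>f(\<cdot>\<^sup>-\<^sup>1x)\<close> is \<open>p\<close>-integrable on balls, i.e. for almost
  every \<open>x\<close>: there it equals a supremum over rational radii, which is measurable.\<close>

lemma epowr_ennreal [simp]: "0 \<le> y \<Longrightarrow> epowr (ennreal y) q = ennreal (y powr q)"
  by (simp add: epowr_def)

lemma epowr_less_top_iff [simp]: "epowr x q < top \<longleftrightarrow> x < top"
  by (cases x) (auto simp: epowr_def)

lemma epowr_one [simp]: "epowr x 1 = x"
  by (cases x) (auto simp: epowr_def)

lemma epowr_epowr: "epowr (epowr x q) r = epowr x (q * r)"
  by (cases x) (auto simp: epowr_def powr_powr)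

lemma epowr_mono: "x \<le> y \<Longrightarrow> 0 \<le> q \<Longrightarrow> epowr x q \<le> epowr y q"
  by (cases x; cases y) (auto simp: epowr_def ennreal_leI powr_mono2 top_unique)

lemma epowr_le_iff:
  assumes "0 < q" shows "epowr x q \<le> epowr y q \<longleftrightarrow> x \<le> y"
proof
  assume "epowr x q \<le> epowr y q"
  then have "epowr (epowr x q) (1/q) \<le> epowr (epowr y q) (1/q)"
    using assms by (simp add: epowr_mono)
  then show "x \<le> y"
    using assms by (simp add: epowr_epowr)
qed (use assms in \<open>simp add: epowr_mono\<close>)

lemma epowr_mult: "0 < q \<Longrightarrow> epowr (x * y) q = epowr x q * epowr y q"
  by (cases x; cases y) (auto simp: epowr_def ennreal_mult_top ennreal_top_mult powr_mult ennreal_mult[symmetric])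

lemma epowr_measurable [measurable]:
  "h \<in> borel_measurable M \<Longrightarrow> (\<lambda>x. epowr (h x) q) \<in> borel_measurable M"
  unfolding epowr_def by (intro measurable_If) auto

lemma epowr_SUP_le:
  assumes "0 < q" shows "epowr (SUP i\<in>I. y i) q \<le> (SUP i\<in>I. epowr (y i) q)"
proof -
  let ?S = "SUP i\<in>I. epowr (y i) q"
  have "y i \<le> epowr ?S (1/q)" if "i \<in> I" for i
  proof -
    have "epowr (epowr (y i) q) (1/q) \<le> epowr ?S (1/q)"
      using assms that by (intro epowr_mono SUP_upper) auto
    then show ?thesis
      using assms by (simp add: epowr_epowr)
  qed
  then have "epowr (SUP i\<in>I. y i) q \<le> epowr (epowr ?S (1/q)) q"
    using assms by (intro epowr_mono SUP_least) auto
  then show ?thesis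
    using assms by (simp add: epowr_epowr)
qed

lemma Lp_norm_le_iff:
  assumes "0 < p"
  shows "Lp_norm M p F \<le> c * Lp_norm M p G \<longleftrightarrow>
    (\<integral>\<^sup>+x. epowr (F x) p \<partial>M) \<le> epowr c p * (\<integral>\<^sup>+x. epowr (G x) p \<partial>M)"
proof -
  have "c * Lp_norm M p G = epowr (epowr c p * (\<integral>\<^sup>+x. epowr (G x) p \<partial>M)) (1/p)"
    using assms by (simp add: Lp_norm_def epowr_mult epowr_epowr)
  then show ?thesis
    using assms by (simp add: Lp_norm_def epowr_le_iff)
qed

lemma in_Lp_iff:
  "in_Lp M p f \<longleftrightarrow> f \<in> borel_measurable M \<and> (\<integral>\<^sup>+x. ennreal (\<bar>f x\<bar> powr p) \<partial>M) < \<infinity>"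
  by (simp add: in_Lp_def Lp_norm_def)

lemma SUP_Ioc_eq_SUP_Rats:
  fixes \<phi> :: "real \<Rightarrow> 'a::{complete_linorder, linorder_topology}"
  assumes a: "a < b" and right_cont: "\<And>t. a < t \<Longrightarrow> t < b \<Longrightarrow> (\<phi> \<longlongrightarrow> \<phi> t) (at_right t)"
  shows "(SUP t\<in>{a<..b}. \<phi> t) = (SUP t\<in>insert b ({a<..<b} \<inter> \<rat>). \<phi> t)"
proof (rule antisym)
  let ?S = "SUP t\<in>insert b ({a<..<b} \<inter> \<rat>). \<phi> t"
  have below: "\<phi> t \<le> ?S" if t: "a < t" "t < b" for t
  proof (rule ccontr)
    assume "\<not> \<phi> t \<le> ?S"
    then have "\<forall>\<^sub>F u in at_right t. ?S < \<phi> u"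
      using right_cont[OF t] by (intro order_tendstoD(1)) auto
    then obtain c where "c > t" and c: "\<And>u. t < u \<Longrightarrow> u < c \<Longrightarrow> ?S < \<phi> u"
      by (auto simp: eventually_at_right_field)
    obtain u where "u \<in> \<rat>" "t < u" "u < min b c"
      using Rats_dense_in_real[of t "min b c"] \<open>c > t\<close> t by auto
    then have "\<phi> u \<le> ?S"
      using t by (intro SUP_upper) auto
    moreover have "?S < \<phi> u"
      using \<open>t < u\<close> \<open>u < min b c\<close> by (intro c) auto
    ultimately show False by simp
  qed
  show "(SUP t\<in>{a<..b}. \<phi> t) \<le> ?S"
  proof (rule SUP_least)
    fix t assume "t \<in> {a<..b}"
    then show "\<phi> t \<le> ?S"
      using below[of t] by (cases "t = b") (auto intro: SUP_upper)
  qed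
qed (use a in \<open>intro SUP_subset_mono, auto\<close>)

lemma set_integrable_if_nn_integral_powr_finite:
  fixes \<psi> :: "'a \<Rightarrow> real"
  assumes [measurable]: "\<psi> \<in> borel_measurable M" "A \<in> sets M"
    and "emeasure M A < \<infinity>" and p: "1 \<le> p"
    and "(\<integral>\<^sup>+x. indicator A x * ennreal (\<bar>\<psi> x\<bar> powr p) \<partial>M) < \<infinity>"
  shows "set_integrable M A \<psi>"
proof -
  have abs_le: "ennreal \<bar>y\<bar> \<le> 1 + ennreal (\<bar>y\<bar> powr p)" for y :: real
  proof -
    have "\<bar>y\<bar> \<le> 1 + \<bar>y\<bar> powr p"
    proof (cases "\<bar>y\<bar> \<le> 1")
      case False
      then have "\<bar>y\<bar> powr 1 \<le> \<bar>y\<bar> powr p"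
        using p by (intro powr_mono) auto
      then show ?thesis
        using False by simp
    qed (simp add: add_increasing2)
    then show ?thesis
      by (metis ennreal_leI ennreal_plus ennreal_1 powr_ge_zero zero_le_one)
  qed
  have "(\<integral>\<^sup>+x. ennreal (norm (indicator A x * \<psi> x)) \<partial>M)
      \<le> (\<integral>\<^sup>+x. indicator A x + indicator A x * ennreal (\<bar>\<psi> x\<bar> powr p) \<partial>M)"
    using abs_le by (intro nn_integral_mono) (auto split: split_indicator)
  also have "\<dots> = emeasure M A + (\<integral>\<^sup>+x. indicator A x * ennreal (\<bar>\<psi> x\<bar> powr p) \<partial>M)"
    by (subst nn_integral_add) auto
  also have "\<dots> < \<infinity>"
    using assms by simp
  finally show ?thesis
    unfolding set_integrable_def by (intro integrableI_bounded) auto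
qed

locale group_action_ball_averages =
  fixes gm :: "'g::{t2_space,second_countable_topology} \<Rightarrow> 'g \<Rightarrow> 'g"
    and e :: 'g and ginv :: "'g \<Rightarrow> 'g" and mG :: "'g measure"
    and d :: "'g \<Rightarrow> 'g \<Rightarrow> real" and M :: "'x measure" and a :: "'g \<Rightarrow> 'x \<Rightarrow> 'x"
    and p :: real
  assumes group: "lcsc_group gm e ginv"
    and metric: "left_inv_metric gm d"
    and sets_mG: "sets mG = sets borel"
    and balls: "\<And>t. 0 < t \<Longrightarrow>
      closed (Bt d e t) \<and> 0 < emeasure mG (Bt d e t) \<and> emeasure mG (Bt d e t) < \<infinity>"
    and action: "mp_action gm e mG M a"
    and sigma_finite_M: "sigma_finite_measure M"
    and p: "1 \<le> p"
begin

lemma space_mG [simp]: "space mG = UNIV"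
  using sets_eq_imp_space_eq[OF sets_mG] by simp

lemma sets_Bt [measurable]: "0 < t \<Longrightarrow> Bt d e t \<in> sets mG"
  using balls by (simp add: sets_mG)

lemma emeasure_Bt: "0 < t \<Longrightarrow> emeasure mG (Bt d e t) = ennreal (measure mG (Bt d e t))"
  using balls by (intro emeasure_eq_ennreal_measure) (simp add: less_top)

lemma measure_Bt_pos: "0 < t \<Longrightarrow> 0 < measure mG (Bt d e t)"
  using balls emeasure_Bt by (metis ennreal_less_zero_iff)

lemma Bt_mono: "s \<le> t \<Longrightarrow> Bt d e s \<subseteq> Bt d e t"
  by (auto simp: Bt_def)

lemma sigma_finite_mG: "sigma_finite_measure mG"
proof
  let ?A = "range (\<lambda>n::nat. Bt d e (Suc n))"
  have "\<Union>?A = UNIV"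
  proof safe
    fix g
    obtain n :: nat where "d e g \<le> n"
      using real_arch_simple by blast
    then show "g \<in> \<Union>?A"
      by (auto simp: Bt_def intro!: exI[of _ n])
  qed auto
  then show "\<exists>A. countable A \<and> A \<subseteq> sets mG \<and> \<Union>A = space mG \<and> (\<forall>a\<in>A. emeasure mG a \<noteq> \<infinity>)"
    by (intro exI[of _ ?A]) (auto simp: emeasure_Bt)
qed

sublocale G: sigma_finite_measure mG
  by (rule sigma_finite_mG)

sublocale GX: pair_sigma_finite mG M
  using sigma_finite_mG sigma_finite_M by (simp add: pair_sigma_finite_def)

lemma ginv_measurable [measurable]: "ginv \<in> measurable mG mG"
proof -
  have "continuous_on UNIV ginv"
    using group by (simp add: lcsc_group_def)
  then show ?thesis
    by (simp add: borel_measurable_continuous_onI measurable_cong_sets[OF sets_mG sets_mG])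
qed

lemma action_measurable [measurable]:
  assumes "f \<in> measurable N mG" "h \<in> measurable N M"
  shows "(\<lambda>z. a (f z) (h z)) \<in> measurable N M"
proof -
  have "(\<lambda>(g, x). a g x) \<in> measurable (mG \<Otimes>\<^sub>M M) M"
    using action by (simp add: mp_action_def)
  from measurable_compose[OF measurable_Pair[OF assms] this] show ?thesis
    by simp
qed

lemma nn_integral_action:
  assumes "h \<in> borel_measurable M"
  shows "(\<integral>\<^sup>+x. h (a g x) \<partial>M) = integral\<^sup>N M h"
  using action nn_integral_distr[of "a g" M M h] assms by (simp add: mp_action_def)

lemma ginv_mult: "ginv (gm g h) = gm (ginv h) (ginv g)"
  using group unfolding lcsc_group_def by metis

lemma action_ginv_mult: "x \<in> space M \<Longrightarrow> a (ginv h) (a (ginv g) x) = a (ginv (gm g h)) x"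
  using action by (simp add: mp_action_def ginv_mult)

lemma length_mult: "d e (gm g h) \<le> d e g + d e h"
proof -
  have "d g (gm g h) = d e h"
    using metric group by (metis left_inv_metric_def lcsc_group_def)
  then show ?thesis
    using metric by (metis left_inv_metric_def)
qed

lemma nn_integral_translates:
  assumes [measurable]: "h \<in> borel_measurable M" "B \<in> sets mG"
  shows "(\<integral>\<^sup>+x. \<integral>\<^sup>+g. indicator B g * h (a (ginv g) x) \<partial>mG \<partial>M) = emeasure mG B * integral\<^sup>N M h"
proof -
  have "(\<integral>\<^sup>+x. \<integral>\<^sup>+g. indicator B g * h (a (ginv g) x) \<partial>mG \<partial>M)
      = (\<integral>\<^sup>+g. \<integral>\<^sup>+x. indicator B g * h (a (ginv g) x) \<partial>M \<partial>mG)"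
    by (rule GX.Fubini') measurable
  also have "\<dots> = (\<integral>\<^sup>+g. integral\<^sup>N M h * indicator B g \<partial>mG)"
    by (intro nn_integral_cong) (simp add: nn_integral_cmult nn_integral_action mult.commute)
  also have "\<dots> = integral\<^sup>N M h * emeasure mG B"
    by (simp add: nn_integral_cmult_indicator)
  finally show ?thesis
    by (simp add: mult.commute)
qed

lemma AE_ball_integral_finite:
  assumes f: "in_Lp M p f" and s: "0 < s"
  shows "AE x in M. (\<integral>\<^sup>+g. indicator (Bt d e s) g * ennreal (\<bar>f (a (ginv g) x)\<bar> powr p) \<partial>mG) < \<infinity>"
proof -
  have [measurable]: "f \<in> borel_measurable M" "Bt d e s \<in> sets mG"
    using f s by (simp_all add: in_Lp_iff)
  have "(\<integral>\<^sup>+x. \<integral>\<^sup>+g. indicator (Bt d e s) g * ennreal (\<bar>f (a (ginv g) x)\<bar> powr p) \<partial>mG \<partial>M) \<noteq> \<infinity>"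
    using f s nn_integral_translates[of "\<lambda>y. ennreal (\<bar>f y\<bar> powr p)" "Bt d e s"]
    by (simp add: emeasure_Bt in_Lp_iff ennreal_mult_eq_top_iff less_top)
  from nn_integral_PInf_AE[OF _ this] show ?thesis
    by (simp add: less_top[symmetric])
qed

lemma pi_beta_measurable [measurable]:
  assumes [measurable]: "f \<in> borel_measurable M" and t: "0 < t"
  shows "pi_beta a ginv mG d e t f \<in> borel_measurable M"
proof -
  have [measurable]: "Bt d e t \<in> sets mG"
    using t by simp
  have "(\<lambda>x. \<integral>g. indicator (Bt d e t) g * f (a (ginv g) x) \<partial>mG) \<in> borel_measurable M"
    by (rule G.borel_measurable_lebesgue_integral) measurable
  then show ?thesis
    unfolding pi_beta_def[abs_def] by measurable
qed

lemma set_integral_Bt_right_continuous: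
  fixes \<psi> :: "'g \<Rightarrow> real"
  assumes int: "set_integrable mG (Bt d e s) \<psi>" and t: "0 < t" "t < s"
  shows "((\<lambda>u. LINT g:Bt d e u|mG. \<psi> g) \<longlongrightarrow> (LINT g:Bt d e t|mG. \<psi> g)) (at_right t)"
proof (rule tendsto_at_right_sequentially[OF \<open>t < s\<close>])
  fix S assume S: "\<And>n. t < S n" "\<And>n. S n < s" "decseq S" "S \<longlonglongrightarrow> t"
  have "(\<Inter>n. Bt d e (S n)) = Bt d e t"
  proof (intro equalityI subsetI)
    fix g assume "g \<in> (\<Inter>n. Bt d e (S n))"
    then show "g \<in> Bt d e t"
      using LIMSEQ_le_const[OF S(4), of "d e g"] by (auto simp: Bt_def)
  qed (use S(1) in \<open>auto simp: Bt_def intro: order_trans[OF _ less_imp_le]\<close>)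
  moreover have "(\<lambda>n. LINT g:Bt d e (S n)|mG. \<psi> g) \<longlonglongrightarrow> (LINT g:(\<Inter>n. Bt d e (S n))|mG. \<psi> g)"
  proof (rule set_integral_cont_down)
    show sets: "Bt d e (S n) \<in> sets mG" for n
      using S(1) t by (simp add: less_trans[of 0 t])
    show "decseq (\<lambda>n. Bt d e (S n))"
      using S(3) by (auto simp: decseq_def Bt_def intro: order_trans)
    show "set_integrable mG (Bt d e (S 0)) \<psi>"
      using sets Bt_mono[OF less_imp_le[OF S(2)]] by (intro set_integrable_subset[OF int]) auto
  qed
  ultimately show "(\<lambda>n. LINT g:Bt d e (S n)|mG. \<psi> g) \<longlonglongrightarrow> (LINT g:Bt d e t|mG. \<psi> g)"
    by simp
qed

lemma pi_beta_right_continuous: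
  assumes [measurable]: "f \<in> borel_measurable M" and x: "x \<in> space M"
    and fin: "(\<integral>\<^sup>+g. indicator (Bt d e s) g * ennreal (\<bar>f (a (ginv g) x)\<bar> powr p) \<partial>mG) < \<infinity>"
    and t: "0 < t" "t < s"
  shows "((\<lambda>u. pi_beta a ginv mG d e u f x) \<longlongrightarrow> pi_beta a ginv mG d e t f x) (at_right t)"
proof -
  have s: "0 < s"
    using t by simp
  have [measurable]: "Bt d e s \<in> sets mG"
    using s by simp
  have "set_integrable mG (Bt d e s) (\<lambda>g. f (a (ginv g) x))"
    using balls[OF s] fin x p by (intro set_integrable_if_nn_integral_powr_finite) auto
  then have num: "((\<lambda>u. LINT g:Bt d e u|mG. f (a (ginv g) x))
      \<longlongrightarrow> (LINT g:Bt d e t|mG. f (a (ginv g) x))) (at_right t)"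
    using t by (rule set_integral_Bt_right_continuous)
  have "set_integrable mG (Bt d e s) (\<lambda>_. 1::real)"
    using balls[OF s] by (simp add: set_integrable_def)
  then have "((\<lambda>u. LINT g:Bt d e u|mG. (1::real)) \<longlongrightarrow> (LINT g:Bt d e t|mG. 1)) (at_right t)"
    using t by (rule set_integral_Bt_right_continuous)
  moreover have "\<forall>\<^sub>F u in at_right t. (LINT g:Bt d e u|mG. (1::real)) = measure mG (Bt d e u)"
    using eventually_at_right_less[of t]
    by (rule eventually_mono) (use t(1) in \<open>simp add: set_integral_const emeasure_Bt\<close>)
  ultimately have den: "((\<lambda>u. measure mG (Bt d e u)) \<longlongrightarrow> measure mG (Bt d e t)) (at_right t)"
    using t(1) by (simp add: set_integral_const emeasure_Bt tendsto_cong)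
  from tendsto_divide[OF num den] show ?thesis
    using measure_Bt_pos[OF t(1)] by (simp add: pi_beta_def set_lebesgue_integral_def)
qed

definition pi_max :: "('x \<Rightarrow> real) \<Rightarrow> real \<Rightarrow> 'x \<Rightarrow> ennreal" where
  "pi_max f s x = (SUP t\<in>{0<..s}. ennreal \<bar>pi_beta a ginv mG d e t f x\<bar>)"

definition pi_max_rat :: "('x \<Rightarrow> real) \<Rightarrow> real \<Rightarrow> 'x \<Rightarrow> ennreal" where
  "pi_max_rat f s x = (SUP t\<in>insert s ({0<..<s} \<inter> \<rat>). ennreal \<bar>pi_beta a ginv mG d e t f x\<bar>)"

lemma pi_max_mono: "s \<le> s' \<Longrightarrow> pi_max f s x \<le> pi_max f s' x"
  unfolding pi_max_def by (intro SUP_subset_mono) auto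

lemma pi_max_rat_le_pi_max: "0 < s \<Longrightarrow> pi_max_rat f s x \<le> pi_max f s x"
  unfolding pi_max_def pi_max_rat_def by (intro SUP_subset_mono) auto

lemma pi_max_rat_measurable [measurable]:
  assumes [measurable]: "f \<in> borel_measurable M" and s: "0 < s"
  shows "pi_max_rat f s \<in> borel_measurable M"
proof -
  have [measurable]: "pi_beta a ginv mG d e t f \<in> borel_measurable M" if "t \<in> insert s ({0<..<s} \<inter> \<rat>)" for t
    using that s by (intro pi_beta_measurable) auto
  show ?thesis
    unfolding pi_max_rat_def[abs_def]
    by (intro borel_measurable_SUP) (auto intro: countable_rat)
qed

lemma AE_pi_max_eq_pi_max_rat:
  assumes f: "in_Lp M p f" and s: "0 < s"
  shows "AE x in M. pi_max f s x = pi_max_rat f s x"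
  using AE_ball_integral_finite[OF f s]
proof (rule AE_mp, intro AE_I2 impI)
  fix x assume x: "x \<in> space M"
    and fin: "(\<integral>\<^sup>+g. indicator (Bt d e s) g * ennreal (\<bar>f (a (ginv g) x)\<bar> powr p) \<partial>mG) < \<infinity>"
  have fm: "f \<in> borel_measurable M"
    using f by (simp add: in_Lp_iff)
  show "pi_max f s x = pi_max_rat f s x"
    unfolding pi_max_def pi_max_rat_def
    using s by (intro SUP_Ioc_eq_SUP_Rats tendsto_ennrealI tendsto_rabs pi_beta_right_continuous[OF fm x fin])
qed

lemma pi_beta_translate_eq_rho_beta:
  assumes x: "x \<in> space M" and g: "d e g \<le> R - r" and t: "t \<le> r"
  shows "pi_beta a ginv mG d e t f (a (ginv g) x)
       = rho_beta gm mG d e t (\<lambda>k. indicator (Bt d e R) k * f (a (ginv k) x)) g"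
  unfolding pi_beta_def rho_beta_def
proof (intro arg_cong2[where f="(/)"] refl Bochner_Integration.integral_cong)
  fix h
  have "gm g h \<in> Bt d e R" if "h \<in> Bt d e t"
    using that g t length_mult[of g h] by (simp add: Bt_def)
  then show "indicator (Bt d e t) h * f (a (ginv h) (a (ginv g) x))
      = indicator (Bt d e t) h * (indicator (Bt d e R) (gm g h) * f (a (ginv (gm g h)) x))"
    using x by (simp add: action_ginv_mult split: split_indicator)
qed

lemma pi_max_translates_nn_integral_le:
  assumes [measurable]: "f \<in> borel_measurable M" and x: "x \<in> space M"
    and fin: "(\<integral>\<^sup>+g. indicator (Bt d e R) g * ennreal (\<bar>f (a (ginv g) x)\<bar> powr p) \<partial>mG) < \<infinity>"
    and r: "0 < r" "r < R" and H: "local_max_ineq gm mG d e p C r"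
  shows "(\<integral>\<^sup>+g. indicator (Bt d e (R - r)) g * epowr (pi_max f r (a (ginv g) x)) p \<partial>mG)
    \<le> epowr (ennreal C) p * (\<integral>\<^sup>+g. indicator (Bt d e R) g * ennreal (\<bar>f (a (ginv g) x)\<bar> powr p) \<partial>mG)"
proof -
  define F where "F k = indicator (Bt d e R) k * f (a (ginv k) x)" for k
  have [measurable]: "Bt d e R \<in> sets mG"
    using r by simp
  have F_powr: "(\<integral>\<^sup>+g. ennreal (\<bar>F g\<bar> powr p) \<partial>mG)
      = (\<integral>\<^sup>+g. indicator (Bt d e R) g * ennreal (\<bar>f (a (ginv g) x)\<bar> powr p) \<partial>mG)"
    using p by (intro nn_integral_cong) (simp add: F_def split: split_indicator)
  have "in_Lp mG p F"
    using fin x unfolding in_Lp_iff F_powr by (simp add: F_def[abs_def])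
  then have "Lp_norm mG p (\<lambda>g. SUP t\<in>{0<..r}. ennreal \<bar>rho_beta gm mG d e t F g\<bar>)
      \<le> ennreal C * Lp_norm mG p (\<lambda>g. ennreal \<bar>F g\<bar>)"
    using H by (simp add: local_max_ineq_def)
  then have max_F: "(\<integral>\<^sup>+g. epowr (SUP t\<in>{0<..r}. ennreal \<bar>rho_beta gm mG d e t F g\<bar>) p \<partial>mG)
      \<le> epowr (ennreal C) p * (\<integral>\<^sup>+g. ennreal (\<bar>F g\<bar> powr p) \<partial>mG)"
    using p by (simp add: Lp_norm_le_iff)
  have "indicator (Bt d e (R - r)) g * epowr (pi_max f r (a (ginv g) x)) p
      \<le> epowr (SUP t\<in>{0<..r}. ennreal \<bar>rho_beta gm mG d e t F g\<bar>) p" for g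
  proof (cases "g \<in> Bt d e (R - r)")
    case True
    then have "pi_max f r (a (ginv g) x) = (SUP t\<in>{0<..r}. ennreal \<bar>rho_beta gm mG d e t F g\<bar>)"
      unfolding pi_max_def F_def[abs_def] using x
      by (intro SUP_cong refl) (simp add: Bt_def pi_beta_translate_eq_rho_beta)
    then show ?thesis
      using True by simp
  qed simp
  then have "(\<integral>\<^sup>+g. indicator (Bt d e (R - r)) g * epowr (pi_max f r (a (ginv g) x)) p \<partial>mG)
      \<le> (\<integral>\<^sup>+g. epowr (SUP t\<in>{0<..r}. ennreal \<bar>rho_beta gm mG d e t F g\<bar>) p \<partial>mG)"
    by (rule nn_integral_mono)
  with max_F F_powr show ?thesis
    by simp
qed

lemma pi_max_nn_integral_le:
  assumes f: "in_Lp M p f" and r: "0 < r" "r < R" and H: "local_max_ineq gm mG d e p C r"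
  shows "emeasure mG (Bt d e (R - r)) * (\<integral>\<^sup>+x. epowr (pi_max f r x) p \<partial>M)
    \<le> epowr (ennreal C) p * emeasure mG (Bt d e R) * (\<integral>\<^sup>+x. ennreal (\<bar>f x\<bar> powr p) \<partial>M)"
proof -
  have [measurable]: "f \<in> borel_measurable M" "Bt d e (R - r) \<in> sets mG" "Bt d e R \<in> sets mG"
    using f r by (simp_all add: in_Lp_iff)
  have "(\<integral>\<^sup>+x. epowr (pi_max f r x) p \<partial>M) = (\<integral>\<^sup>+x. epowr (pi_max_rat f r x) p \<partial>M)"
    using AE_pi_max_eq_pi_max_rat[OF f r(1)] by (intro nn_integral_cong_AE) auto
  then have "emeasure mG (Bt d e (R - r)) * (\<integral>\<^sup>+x. epowr (pi_max f r x) p \<partial>M)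
      = (\<integral>\<^sup>+x. \<integral>\<^sup>+g. indicator (Bt d e (R - r)) g * epowr (pi_max_rat f r (a (ginv g) x)) p \<partial>mG \<partial>M)"
    using r by (simp add: nn_integral_translates[of "\<lambda>y. epowr (pi_max_rat f r y) p"])
  also have "\<dots> \<le> (\<integral>\<^sup>+x. \<integral>\<^sup>+g. indicator (Bt d e (R - r)) g * epowr (pi_max f r (a (ginv g) x)) p \<partial>mG \<partial>M)"
    using r p by (intro nn_integral_mono mult_left_mono epowr_mono pi_max_rat_le_pi_max) auto
  also have "\<dots> \<le> (\<integral>\<^sup>+x. epowr (ennreal C) p
      * (\<integral>\<^sup>+g. indicator (Bt d e R) g * ennreal (\<bar>f (a (ginv g) x)\<bar> powr p) \<partial>mG) \<partial>M)"
    using order.strict_trans[OF r]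
    by (intro nn_integral_mono_AE, rule AE_mp[OF AE_ball_integral_finite[OF f]])
      (auto intro!: AE_I2 pi_max_translates_nn_integral_le[OF _ _ _ r H])
  also have "\<dots> = epowr (ennreal C) p * emeasure mG (Bt d e R) * (\<integral>\<^sup>+x. ennreal (\<bar>f x\<bar> powr p) \<partial>M)"
    by (simp add: nn_integral_cmult nn_integral_translates[of "\<lambda>y. ennreal (\<bar>f y\<bar> powr p)"] mult.assoc)
  finally show ?thesis .
qed

lemma pi_max_nn_integral_le_ratio:
  assumes f: "in_Lp M p f" and r: "0 < r" "r < R" and H: "local_max_ineq gm mG d e p C r"
  shows "(\<integral>\<^sup>+x. epowr (pi_max f r x) p \<partial>M)
    \<le> epowr (ennreal C) p * ennreal (measure mG (Bt d e R) / measure mG (Bt d e (R - r)))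
      * (\<integral>\<^sup>+x. ennreal (\<bar>f x\<bar> powr p) \<partial>M)"
proof -
  let ?I = "\<integral>\<^sup>+x. epowr (pi_max f r x) p \<partial>M" and ?J = "\<integral>\<^sup>+x. ennreal (\<bar>f x\<bar> powr p) \<partial>M"
  define m1 where "m1 = measure mG (Bt d e (R - r))"
  define m2 where "m2 = measure mG (Bt d e R)"
  have m1: "0 < m1" and m2: "0 \<le> m2"
    using r by (simp_all add: m1_def m2_def measure_Bt_pos)
  have "?I = ?I * ennreal m1 / ennreal m1"
    using m1 by (simp add: ennreal_mult_divide_eq)
  also have "\<dots> \<le> epowr (ennreal C) p * ennreal m2 * ?J / ennreal m1"
    using pi_max_nn_integral_le[OF f r H] r
    by (intro divide_right_mono_ennreal) (simp add: m1_def m2_def emeasure_Bt mult.commute)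
  also have "\<dots> = epowr (ennreal C) p * ennreal (m2 / m1) * ?J"
    using m1 m2 by (simp add: divide_ennreal[symmetric] ennreal_times_divide ennreal_divide_times ac_simps)
  finally show ?thesis
    by (simp add: m1_def m2_def)
qed

lemma local_maximal_inequality:
  assumes f: "in_Lp M p f" and r: "0 < r" "r < R" and H: "local_max_ineq gm mG d e p C r"
  shows "Lp_norm M p (pi_max f r)
    \<le> ennreal (C * (measure mG (Bt d e R) / measure mG (Bt d e (R - r))) powr (1/p))
      * Lp_norm M p (\<lambda>x. ennreal \<bar>f x\<bar>)"
proof -
  let ?\<rho> = "measure mG (Bt d e R) / measure mG (Bt d e (R - r))"
  have "epowr (ennreal (C * ?\<rho> powr (1/p))) p = epowr (ennreal C) p * ennreal ?\<rho>"
    using p by (simp add: ennreal_mult'' epowr_mult powr_powr)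
  then show ?thesis
    using pi_max_nn_integral_le_ratio[OF f r H] p by (simp add: Lp_norm_le_iff)
qed

lemma pi_max_nn_integral_le_of_ratio_tendsto:
  assumes f: "in_Lp M p f" and s: "0 < s"
    and lim: "((\<lambda>R. measure mG (Bt d e R) / measure mG (Bt d e (R - s))) \<longlongrightarrow> 1) at_top"
    and H: "local_max_ineq gm mG d e p C s"
  shows "(\<integral>\<^sup>+x. epowr (pi_max f s x) p \<partial>M) \<le> epowr (ennreal C) p * (\<integral>\<^sup>+x. ennreal (\<bar>f x\<bar> powr p) \<partial>M)"
proof -
  let ?K = "epowr (ennreal C) p * (\<integral>\<^sup>+x. ennreal (\<bar>f x\<bar> powr p) \<partial>M)"
  have "?K < top"
    using f by (simp add: in_Lp_iff epowr_def ennreal_mult_less_top)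
  then have "((\<lambda>R. ?K * ennreal (measure mG (Bt d e R) / measure mG (Bt d e (R - s)))) \<longlongrightarrow> ?K * ennreal 1) at_top"
    using lim by (intro ennreal_tendsto_cmult tendsto_ennrealI)
  moreover have "\<forall>\<^sub>F R in at_top. (\<integral>\<^sup>+x. epowr (pi_max f s x) p \<partial>M)
      \<le> ?K * ennreal (measure mG (Bt d e R) / measure mG (Bt d e (R - s)))"
    using eventually_gt_at_top[of s]
    by (rule eventually_mono) (use pi_max_nn_integral_le_ratio[OF f s _ H] in \<open>simp add: ac_simps\<close>)
  ultimately show ?thesis
    by (intro tendsto_le[OF trivial_limit_at_top_linorder _ tendsto_const]) simp_all
qed

lemma global_maximal_inequality:
  assumes f: "in_Lp M p f"
    and lim: "\<forall>s>0. ((\<lambda>R. measure mG (Bt d e R) / measure mG (Bt d e (R - s))) \<longlongrightarrow> 1) at_top"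
    and H: "\<forall>s>0. local_max_ineq gm mG d e p C s"
  shows "Lp_norm M p (\<lambda>x. SUP t\<in>{0<..}. ennreal \<bar>pi_beta a ginv mG d e t f x\<bar>)
    \<le> ennreal C * Lp_norm M p (\<lambda>x. ennreal \<bar>f x\<bar>)"
proof -
  let ?K = "epowr (ennreal C) p * (\<integral>\<^sup>+x. ennreal (\<bar>f x\<bar> powr p) \<partial>M)"
  have [measurable]: "f \<in> borel_measurable M"
    using f by (simp add: in_Lp_iff)
  have "{0::real<..} = (\<Union>n. {0<..real (Suc n)})"
  proof (intro equalityI subsetI)
    fix t :: real assume "t \<in> {0<..}"
    moreover obtain n :: nat where "t \<le> n"
      using real_arch_simple by blast
    ultimately show "t \<in> (\<Union>n. {0<..real (Suc n)})"
      by (auto intro!: exI[of _ n])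
  qed auto
  then have sup: "(SUP t\<in>{0<..}. ennreal \<bar>pi_beta a ginv mG d e t f x\<bar>) = (SUP n. pi_max f (Suc n) x)" for x
    by (simp add: pi_max_def SUP_UNION)
  have AE_eq: "AE x in M. \<forall>n. pi_max f (Suc n) x = pi_max_rat f (Suc n) x"
    using f by (simp add: AE_all_countable AE_pi_max_eq_pi_max_rat)
  have "(\<integral>\<^sup>+x. epowr (SUP n. pi_max f (Suc n) x) p \<partial>M)
      = (\<integral>\<^sup>+x. epowr (SUP n. pi_max_rat f (Suc n) x) p \<partial>M)"
    using AE_eq by (intro nn_integral_cong_AE) auto
  also have "\<dots> \<le> (\<integral>\<^sup>+x. (SUP n. epowr (pi_max_rat f (Suc n) x) p) \<partial>M)"
    using p by (intro nn_integral_mono epowr_SUP_le) simp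
  also have "\<dots> = (SUP n. \<integral>\<^sup>+x. epowr (pi_max_rat f (Suc n) x) p \<partial>M)"
  proof (rule nn_integral_monotone_convergence_SUP_AE)
    show "AE x in M. epowr (pi_max_rat f (Suc n) x) p \<le> epowr (pi_max_rat f (Suc (Suc n)) x) p" for n
      using AE_eq
    proof eventually_elim
      case (elim x)
      have "pi_max f (Suc n) x \<le> pi_max f (Suc (Suc n)) x"
        by (rule pi_max_mono) simp
      then have "pi_max_rat f (Suc n) x \<le> pi_max_rat f (Suc (Suc n)) x"
        using elim by metis
      then show ?case
        using p by (intro epowr_mono) auto
    qed
  qed measurable
  also have "\<dots> \<le> ?K"
  proof (rule SUP_least)
    fix n
    have "(\<integral>\<^sup>+x. epowr (pi_max_rat f (Suc n) x) p \<partial>M) = (\<integral>\<^sup>+x. epowr (pi_max f (Suc n) x) p \<partial>M)"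
      using AE_eq by (intro nn_integral_cong_AE) auto
    also have "\<dots> \<le> ?K"
      using lim H by (intro pi_max_nn_integral_le_of_ratio_tendsto f) auto
    finally show "(\<integral>\<^sup>+x. epowr (pi_max_rat f (Suc n) x) p \<partial>M) \<le> ?K" .
  qed
  finally show ?thesis
    using p by (simp add: Lp_norm_le_iff sup)
qed

end

theorem theorem5p9:
  fixes gm :: "'g::{t2_space,second_countable_topology} \<Rightarrow> 'g \<Rightarrow> 'g"
    and e :: 'g and ginv :: "'g \<Rightarrow> 'g" and mG :: "'g measure"
    and d :: "'g \<Rightarrow> 'g \<Rightarrow> real" and p C r :: real
    and M :: "'x measure" and a :: "'g \<Rightarrow> 'x \<Rightarrow> 'x"
  assumes G: "lcsc_group gm e ginv" and haar: "unimodular_haar gm mG"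
    and metric: "left_inv_metric gm d"
    and balls: "\<forall>t>0. compact (Bt d e t) \<and> emeasure mG (Bt d e t) > 0"
    and p: "1 < p"
    and act: "mp_action gm e mG M a" and sf: "sigma_finite_measure M"
  shows "(0 < r \<and> local_max_ineq gm mG d e p C r \<longrightarrow>
            (\<forall>f R. in_Lp M p f \<and> 2 * r \<le> R \<longrightarrow>
               Lp_norm M p (\<lambda>x. SUP t\<in>{0<..r}. ennreal \<bar>pi_beta a ginv mG d e t f x\<bar>)
                 \<le> ennreal (C * (measure mG (Bt d e R) / measure mG (Bt d e (R - r))) powr (1/p))
                    * Lp_norm M p (\<lambda>x. ennreal \<bar>f x\<bar>)))
       \<and> ((\<forall>s>0. ((\<lambda>R. measure mG (Bt d e R) / measure mG (Bt d e (R - s))) \<longlongrightarrow> 1) at_top)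
           \<and> (\<forall>s>0. local_max_ineq gm mG d e p C s) \<longrightarrow>
            (\<forall>f. in_Lp M p f \<longrightarrow>
               Lp_norm M p (\<lambda>x. SUP t\<in>{0<..}. ennreal \<bar>pi_beta a ginv mG d e t f x\<bar>)
                 \<le> ennreal C * Lp_norm M p (\<lambda>x. ennreal \<bar>f x\<bar>)))"
proof -
  have left_haar: "left_haar gm mG"
    using haar by (simp add: unimodular_haar_def)
  interpret group_action_ball_averages gm e ginv mG d M a p
  proof (rule group_action_ball_averages.intro)
    show "sets mG = sets borel"
      using left_haar by (simp add: left_haar_def)
    show "closed (Bt d e t) \<and> 0 < emeasure mG (Bt d e t) \<and> emeasure mG (Bt d e t) < \<infinity>" if "0 < t" for t
      using balls left_haar that by (simp add: left_haar_def compact_imp_closed)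
    show "lcsc_group gm e ginv" "left_inv_metric gm d" "mp_action gm e mG M a" "sigma_finite_measure M" "1 \<le> p"
      using G metric act sf p by simp_all
  qed
  show ?thesis
  proof (intro conjI impI allI)
    fix f R
    assume "0 < r \<and> local_max_ineq gm mG d e p C r" and "in_Lp M p f \<and> 2 * r \<le> R"
    then show "Lp_norm M p (\<lambda>x. SUP t\<in>{0<..r}. ennreal \<bar>pi_beta a ginv mG d e t f x\<bar>)
        \<le> ennreal (C * (measure mG (Bt d e R) / measure mG (Bt d e (R - r))) powr (1/p))
          * Lp_norm M p (\<lambda>x. ennreal \<bar>f x\<bar>)"
      using local_maximal_inequality[of f r R C] by (simp add: pi_max_def[abs_def])
  next
    fix f
    assume "(\<forall>s>0. ((\<lambda>R. measure mG (Bt d e R) / measure mG (Bt d e (R - s))) \<longlongrightarrow> 1) at_top)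
      \<and> (\<forall>s>0. local_max_ineq gm mG d e p C s)" and "in_Lp M p f"
    then show "Lp_norm M p (\<lambda>x. SUP t\<in>{0<..}. ennreal \<bar>pi_beta a ginv mG d e t f x\<bar>)
        \<le> ennreal C * Lp_norm M p (\<lambda>x. ennreal \<bar>f x\<bar>)"
      by (intro global_maximal_inequality) auto
  qed
qed

end
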